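(* Let \[U_1:=\left\{(a,b)\in\bigl([0,1/2)\times[1/2,1)\bigr)\cup\bigl([1/2,1)\times[0,1/2)\bigr):\ a+b<\tfrac34\right\}.\] Let $x,z\in U_1$ and let $y^*=\frac{x+z}{2}$. Then \[(1-\{x_1\})^2+(1-\{z_1\})^2-2(1-\{y^*_1\})^2\ge 2\left(\frac{z_1-x_1}{2}\right)^2.\]
   Context: For $x\in[0,1)$, $\{x\}:=x$ if $x\in[0,1/2)$ and $\{x\}:=x-1/2$ otherwise (this is not the usual fractional part). Subscripts denote coordinates of points in $\mathbb{R}^2$. *)

theory Defs
  imports "HOL-Analysis.Analysis"
begin

text \<open>The paper's modified fractional part on [0,1): x if x < 1/2, x - 1/2 otherwise.
  It is only applied to arguments in [0,1) in the statement.\<close>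
definition hfrac :: "real \<Rightarrow> real" where
  "hfrac x = (if 0 \<le> x \<and> x < 1/2 then x else x - 1/2)"

definition U1 :: "(real \<times> real) set" where
  "U1 = {(a, b). ((a \<in> {0..<1/2} \<and> b \<in> {1/2..<1}) \<or> (a \<in> {1/2..<1} \<and> b \<in> {0..<1/2}))
                 \<and> a + b < 3/4}"

end

theory Submission
  imports Defs
begin

(* On each of the halves [0,1/2) and [1/2,1) the map t => 1 - {t} is affine with slope -1,
  and for f t = (s - t)^2 the midpoint defect f a + f c - 2 f ((a+c)/2) is exactly (c - a)^2/2.
  First coordinates of points of U1 lie in [0,1/4) or [1/2,3/4), so the midpoint of two of them
  lies in their common half if they share one, and in the lower half otherwise. In the first
  case the inequality is an equality; in the second only the upper point c is shifted, which
  adds the positive term 5/4 - c. *)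

lemma fst_U1: "p \<in> U1 \<Longrightarrow> fst p \<in> {0..<1/4} \<union> {1/2..<3/4}"
  unfolding U1_def by auto

lemma hfrac_lower_half: "0 \<le> t \<Longrightarrow> t < 1/2 \<Longrightarrow> hfrac t = t"
  unfolding hfrac_def by simp

lemma hfrac_upper_half: "1/2 \<le> t \<Longrightarrow> hfrac t = t - 1/2"
  unfolding hfrac_def by simp

lemma midpoint_defect_square:
  fixes s a c :: "'a :: field_char_0"
  shows "(s - a)^2 + (s - c)^2 - 2 * (s - (a + c) / 2)^2 = 2 * ((c - a) / 2)^2"
  by (simp add: power2_eq_square field_simps)

lemma hfrac_midpoint_defect_same_shift:
  assumes "hfrac a = a - k" "hfrac c = c - k" "hfrac ((a + c) / 2) = (a + c) / 2 - k"
  shows "(1 - hfrac a)^2 + (1 - hfrac c)^2 - 2 * (1 - hfrac ((a + c) / 2))^2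
           = 2 * ((c - a) / 2)^2"
proof -
  have "1 - hfrac a = (1 + k) - a" "1 - hfrac c = (1 + k) - c"
    "1 - hfrac ((a + c) / 2) = (1 + k) - (a + c) / 2"
    using assms by simp_all
  then show ?thesis
    by (simp only: midpoint_defect_square)
qed

lemma hfrac_midpoint_defect_mixed:
  assumes a: "a \<in> {0..<1/4}" and c: "c \<in> {1/2..<3/4}"
  shows "(1 - hfrac a)^2 + (1 - hfrac c)^2 - 2 * (1 - hfrac ((a + c) / 2))^2
           = 2 * ((c - a) / 2)^2 + (5/4 - c)"
proof -
  have "hfrac a = a" "hfrac ((a + c) / 2) = (a + c) / 2"
    using a c by (simp_all add: hfrac_lower_half)
  moreover have "hfrac c = c - 1/2"
    using c by (simp add: hfrac_upper_half)
  ultimately show ?thesis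
    by (simp only:) (simp add: power2_eq_square field_simps)
qed

lemma hfrac_midpoint_defect_ge:
  assumes a: "a \<in> {0..<1/4} \<union> {1/2..<3/4}" and c: "c \<in> {0..<1/4} \<union> {1/2..<3/4}"
  shows "(1 - hfrac a)^2 + (1 - hfrac c)^2 - 2 * (1 - hfrac ((a + c) / 2))^2
           \<ge> 2 * ((c - a) / 2)^2"
proof -
  consider "a \<in> {0..<1/4}" "c \<in> {0..<1/4}" | "a \<in> {1/2..<3/4}" "c \<in> {1/2..<3/4}"
    | "a \<in> {0..<1/4}" "c \<in> {1/2..<3/4}" | "a \<in> {1/2..<3/4}" "c \<in> {0..<1/4}"
    using a c by blast
  then show ?thesis
  proof cases
    case 1
    then show ?thesis
      using hfrac_midpoint_defect_same_shift [of a 0 c] by (simp add: hfrac_lower_half)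
  next
    case 2
    then show ?thesis
      using hfrac_midpoint_defect_same_shift [of a "1/2" c] by (simp add: hfrac_upper_half)
  next
    case 3
    then show ?thesis
      by (simp add: hfrac_midpoint_defect_mixed)
  next
    case 4
    have "(c - a)^2 = (a - c)^2"
      by (simp add: power2_commute)
    with 4 show ?thesis
      using hfrac_midpoint_defect_mixed [of c a] by (simp add: add.commute power_divide)
  qed
qed

theorem lemma4p3:
  fixes x z :: "real \<times> real"
  assumes "x \<in> U1" and "z \<in> U1"
  defines "ystar \<equiv> (1/2) *\<^sub>R (x + z)"
  shows "(1 - hfrac (fst x))^2 + (1 - hfrac (fst z))^2 - 2 * (1 - hfrac (fst ystar))^2
           \<ge> 2 * ((fst z - fst x) / 2)^2"
proof -
  have "fst ystar = (fst x + fst z) / 2"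
    unfolding ystar_def by simp
  then show ?thesis
    using hfrac_midpoint_defect_ge [OF fst_U1 [OF assms(1)] fst_U1 [OF assms(2)]] by (simp only:)
qed

end
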